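(* Let $3\le p<5$. Let $u$ be a radial function in $\dot H^1(\mathbb{R}^3)$ and set $w(r)=r\,u(r)$ for $r>0$ (where $u(r)$ denotes the value of $u(x)$ at $|x|=r$). Then for every $R>0$, \[ |w(R)|\lesssim_p R^{\frac{p-1}{p+3}}\left(\int_0^R|w_r(r)|^2dr\right)^{\frac1{p+3}}\left(\int_0^R\frac{|w(r)|^{p+1}}{r^{p-1}}dr\right)^{\frac1{p+3}}. \]
   Context: $A\lesssim_p B$ means $A\le cB$ for a constant $c$ depending only on $p$. (In the paper this is applied at each fixed time $t$ to $w(r,t)=ru(r,t)$.) *)

theory Defs
  imports "HOL-Analysis.Analysis"
begin

text \<open>A radial function u(x) = f(|x|) in the homogeneous Sobolev space \<open>\<dot>H\<^sup>1(\<real>\<^sup>3)\<close>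
  is described through its (continuous representative) radial profile \<open>f\<close> on \<open>(0,\<infinity>)\<close>:
  \<open>f\<close> is locally absolutely continuous on \<open>(0,\<infinity>)\<close> with (a.e.) derivative \<open>f'\<close>,
  the Dirichlet energy \<open>\<integral>|\<nabla>u|\<^sup>2 = 4\<pi> \<integral>\<^sub>0\<^sup>\<infinity> r\<^sup>2 f'(r)\<^sup>2 dr\<close> is finite, and
  \<open>f(r) \<rightarrow> 0\<close> as \<open>r \<rightarrow> \<infinity>\<close> (the decay encoded in \<open>\<dot>H\<^sup>1\<close>, i.e. no nonzero constants).\<close>

definition radial_Hdot1_profile :: "(real \<Rightarrow> real) \<Rightarrow> (real \<Rightarrow> real) \<Rightarrow> bool" where
  "radial_Hdot1_profile f f' \<longleftrightarrow>
     (\<forall>a b. 0 < a \<longrightarrow> a \<le> b \<longrightarrow> (f' has_integral (f b - f a)) {a..b}) \<and>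
     (\<lambda>r. r\<^sup>2 * (f' r)\<^sup>2) integrable_on {0<..} \<and>
     (f \<longlongrightarrow> 0) at_top"

end

theory Submission
  imports Defs
begin

text \<open>Let \<open>w(r) = r u(r)\<close>, so that \<open>w' = u + r u'\<close>, and put \<open>B = \<integral>\<^sub>0\<^sup>R w'^2\<close>,
  \<open>A = \<integral>\<^sub>0\<^sup>R |w|^(p+1) / r^(p-1)\<close> and \<open>W = |w(R)|\<close>. By Cauchy-Schwarz,
  \<open>|w(R) - w(r)|^2 \<le> B (R - r)\<close>, so \<open>|w| \<ge> W/2\<close> on \<open>[R - d, R]\<close> with \<open>d = W^2 / (4B)\<close>.
  The decay \<open>r u(r)^2 \<le> \<integral>\<^sub>0\<^sup>\<infinity> r^2 u'^2\<close>, obtained from \<open>u(\<infinity>) = 0\<close> and Cauchy-Schwarz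
  against the weight \<open>r\<close>, gives \<open>w(0+) = 0\<close>; letting \<open>r \<rightarrow> 0\<close> in the increment bound then
  yields \<open>W^2 \<le> B R\<close>, so \<open>d < R\<close>. Therefore
  \<open>A \<ge> d (W/2)^(p+1) / R^(p-1)\<close>, i.e. \<open>(W/2)^(p+3) \<le> R^(p-1) B A\<close>, which is the claim with
  \<open>C = 2\<close>. Both integrals are finite: the decay bounds the integrand of \<open>A\<close> by \<open>O(r^((3-p)/2))\<close>,
  which is integrable because \<open>p < 5\<close>, and \<open>w'^2 = (r u^2)' + r^2 u'^2\<close> bounds \<open>\<integral>\<^sub>a\<^sup>R w'^2\<close>
  uniformly in \<open>a > 0\<close>.\<close>

section \<open>Integration by parts for absolutely continuous functions\<close>

lemma sigma_finite_lebesgue: "sigma_finite_measure (lebesgue :: real measure)"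
proof
  show "\<exists>A::real set set. countable A \<and> A \<subseteq> sets lebesgue \<and> \<Union>A = space lebesgue \<and>
      (\<forall>a\<in>A. emeasure lebesgue a \<noteq> \<infinity>)"
  proof (intro exI[of _ "range (\<lambda>n::nat. {-real n..real n})"] conjI)
    show "\<Union>(range (\<lambda>n::nat. {-real n..real n})) = space lebesgue"
    proof safe
      fix x :: real
      obtain n where "\<bar>x\<bar> \<le> real n" using real_arch_simple by blast
      then show "x \<in> \<Union>(range (\<lambda>n::nat. {-real n..real n}))" by (auto intro: exI[of _ n])
    qed auto
  qed (auto simp: emeasure_lborel_cbox_eq)
qed

lemma integrable_lebesgue_pair_triangles:
  fixes P Q :: "real \<Rightarrow> real"
  assumes P: "integrable lebesgue P" and Q: "integrable lebesgue Q"
  shows "integrable (lebesgue \<Otimes>\<^sub>M lebesgue) (\<lambda>(s, t). P s * (indicator {..s} t * Q t))"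
    and "integrable (lebesgue \<Otimes>\<^sub>M lebesgue) (\<lambda>(s, t). Q t * (indicator {..<t} s * P s))"
proof -
  interpret pair_sigma_finite "lebesgue :: real measure" "lebesgue :: real measure"
    by (intro pair_sigma_finite.intro sigma_finite_lebesgue)
  let ?M = "lebesgue \<Otimes>\<^sub>M (lebesgue :: real measure)"
  have [measurable]: "P \<in> borel_measurable lebesgue" "Q \<in> borel_measurable lebesgue"
    using P Q by auto
  have [measurable]: "fst \<in> borel_measurable ?M" "snd \<in> borel_measurable ?M"
    by (auto intro: measurable_compose[OF measurable_fst] measurable_compose[OF measurable_snd]
        simp: measurable_completion)
  have PQ: "integrable ?M (\<lambda>(s, t). P s * Q t)"
    by (rule Fubini_integrable) (use P Q in \<open>auto simp: abs_mult\<close>)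
  have "(\<lambda>(s, t). P s * (indicator {..s} t * Q t))
      = (\<lambda>w. (\<lambda>(s, t). P s * Q t) w * indicator {w \<in> space ?M. snd w \<le> fst w} w)"
    by (auto simp: fun_eq_iff indicator_def space_pair_measure)
  moreover have "{w \<in> space ?M. snd w \<le> fst w} \<in> sets ?M"
    by measurable
  ultimately show "integrable ?M (\<lambda>(s, t). P s * (indicator {..s} t * Q t))"
    using integrable_real_mult_indicator[OF _ PQ] by simp
  have "(\<lambda>(s, t). Q t * (indicator {..<t} s * P s))
      = (\<lambda>w. (\<lambda>(s, t). P s * Q t) w * indicator {w \<in> space ?M. fst w < snd w} w)"
    by (auto simp: fun_eq_iff indicator_def space_pair_measure)
  moreover have "{w \<in> space ?M. fst w < snd w} \<in> sets ?M"
    by measurable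
  ultimately show "integrable ?M (\<lambda>(s, t). Q t * (indicator {..<t} s * P s))"
    using integrable_real_mult_indicator[OF _ PQ] by simp
qed

lemma lebesgue_integral_mult_split_diagonal:
  fixes P Q :: "real \<Rightarrow> real"
  assumes P: "integrable lebesgue P" and Q: "integrable lebesgue Q"
  shows "(\<integral>s. P s * (\<integral>t. indicator {..s} t * Q t \<partial>lebesgue) \<partial>lebesgue)
       + (\<integral>t. Q t * (\<integral>s. indicator {..<t} s * P s \<partial>lebesgue) \<partial>lebesgue)
       = (\<integral>s. P s \<partial>lebesgue) * (\<integral>t. Q t \<partial>lebesgue)"
proof -
  interpret pair_sigma_finite "lebesgue :: real measure" "lebesgue :: real measure"
    by (intro pair_sigma_finite.intro sigma_finite_lebesgue)
  define H1 where "H1 s t = P s * (indicator {..s} t * Q t)" for s t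
  define H2 where "H2 s t = Q t * (indicator {..<t} s * P s)" for s t
  have H1_int: "integrable (lebesgue \<Otimes>\<^sub>M lebesgue) (case_prod H1)"
    and H2_int: "integrable (lebesgue \<Otimes>\<^sub>M lebesgue) (case_prod H2)"
    unfolding H1_def H2_def using integrable_lebesgue_pair_triangles[OF P Q] by simp_all
  have "(\<integral>t. Q t * (\<integral>s. indicator {..<t} s * P s \<partial>lebesgue) \<partial>lebesgue)
      = (\<integral>t. (\<integral>s. H2 s t \<partial>lebesgue) \<partial>lebesgue)"
    by (simp add: H2_def)
  also have "\<dots> = (\<integral>s. (\<integral>t. H2 s t \<partial>lebesgue) \<partial>lebesgue)"
    by (rule Fubini_integral[OF H2_int])
  finally have H2_swap: "(\<integral>t. Q t * (\<integral>s. indicator {..<t} s * P s \<partial>lebesgue) \<partial>lebesgue)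
      = (\<integral>s. (\<integral>t. H2 s t \<partial>lebesgue) \<partial>lebesgue)" .
  have H_inner: "(\<integral>t. H1 s t \<partial>lebesgue) + (\<integral>t. H2 s t \<partial>lebesgue) = P s * (\<integral>t. Q t \<partial>lebesgue)" for s
  proof -
    have "H2 s = (\<lambda>t. P s * (indicator {s<..} t * Q t))"
      by (auto simp: H2_def fun_eq_iff indicator_def)
    then have "integrable lebesgue (H1 s)" "integrable lebesgue (H2 s)"
      unfolding H1_def using integrable_mult_indicator[OF _ Q] by auto
    moreover have "H1 s t + H2 s t = P s * Q t" for t
      by (auto simp: H1_def H2_def indicator_def)
    ultimately show ?thesis
      by (simp add: Bochner_Integration.integral_add[symmetric])
  qed
  have "(\<integral>s. (\<integral>t. H1 s t \<partial>lebesgue) \<partial>lebesgue) + (\<integral>s. (\<integral>t. H2 s t \<partial>lebesgue) \<partial>lebesgue)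
      = (\<integral>s. (\<integral>t. H1 s t \<partial>lebesgue) + (\<integral>t. H2 s t \<partial>lebesgue) \<partial>lebesgue)"
    using integrable_fst[OF H1_int] integrable_fst[OF H2_int] by simp
  also have "\<dots> = (\<integral>s. P s \<partial>lebesgue) * (\<integral>t. Q t \<partial>lebesgue)"
    by (simp add: H_inner)
  finally show ?thesis
    by (simp add: H2_swap H1_def)
qed

lemma continuous_on_if_has_integral_increments:
  fixes f f' :: "real \<Rightarrow> real"
  assumes f: "\<And>x. x \<in> {a..b} \<Longrightarrow> (f' has_integral (f x - f a)) {a..x}"
  shows "continuous_on {a..b} f"
proof (cases "a \<le> b")
  case True
  have "continuous_on {a..b} (\<lambda>x. f a + integral {a..x} f')"
    using f[of b] True by (intro continuous_intros indefinite_integral_continuous_1) auto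
  then show ?thesis
    by (rule continuous_on_eq) (use f in \<open>fastforce dest: integral_unique\<close>)
qed simp

lemma lebesgue_integral_indicator_eq_integral:
  fixes h :: "real \<Rightarrow> real"
  assumes "h absolutely_integrable_on S"
  shows "(\<integral>s. indicator S s * h s \<partial>lebesgue) = integral S h"
  using set_lebesgue_integral_eq_integral(2)[OF assms] by (simp add: set_lebesgue_integral_def)

lemma absolutely_integrable_continuous_mult:
  fixes h k :: "real \<Rightarrow> real"
  assumes "continuous_on {a..b} h" "k absolutely_integrable_on {a..b}"
  shows "(\<lambda>s. h s * k s) absolutely_integrable_on {a..b}"
proof (intro absolutely_integrable_bounded_measurable_product_real
    continuous_imp_measurable_on_sets_lebesgue assms)
  show "bounded (h ` {a..b})"
    by (intro compact_imp_bounded compact_continuous_image assms compact_Icc)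
qed auto

lemma integration_by_parts_absolutely_integrable:
  fixes f g f' g' :: "real \<Rightarrow> real"
  assumes ab: "a \<le> b"
    and f': "f' absolutely_integrable_on {a..b}" and g': "g' absolutely_integrable_on {a..b}"
    and f: "\<And>x. x \<in> {a..b} \<Longrightarrow> (f' has_integral (f x - f a)) {a..x}"
    and g: "\<And>x. x \<in> {a..b} \<Longrightarrow> (g' has_integral (g x - g a)) {a..x}"
  shows "((\<lambda>s. f' s * g s + f s * g' s) has_integral (f b * g b - f a * g a)) {a..b}"
proof -
  define P where "P = (\<lambda>s. indicator {a..b} s * f' s)"
  define Q where "Q = (\<lambda>s. indicator {a..b} s * g' s)"
  have Q_lower: "(\<integral>t. indicator {..s} t * Q t \<partial>lebesgue) = g s - g a" if s: "s \<in> {a..b}" for s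
  proof -
    have "(\<lambda>t. indicator {..s} t * Q t) = (\<lambda>t. indicator {a..s} t * g' t)"
      using s by (auto simp: Q_def indicator_def fun_eq_iff)
    moreover have "g' absolutely_integrable_on {a..s}"
      by (rule set_integrable_subset[OF g']) (use s in auto)
    ultimately show ?thesis
      using lebesgue_integral_indicator_eq_integral g[OF s] by (simp add: integral_unique)
  qed
  have P_lower: "(\<integral>s. indicator {..<t} s * P s \<partial>lebesgue) = f t - f a" if t: "t \<in> {a..b}" for t
  proof -
    have "(\<lambda>s. indicator {..<t} s * P s) = (\<lambda>s. indicator {a..<t} s * f' s)"
      using t by (auto simp: P_def indicator_def fun_eq_iff)
    moreover have "f' absolutely_integrable_on {a..<t}"
      by (rule set_integrable_subset[OF f']) (use t in auto)
    moreover have "integral {a..<t} f' = integral {a..t} f'"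
      by (rule integral_spike_set; rule negligible_subset[OF negligible_sing[of t]]) auto
    ultimately show ?thesis
      using lebesgue_integral_indicator_eq_integral f[OF t] by (simp add: integral_unique)
  qed
  have g_part: "(\<lambda>s. (g s - g a) * f' s) absolutely_integrable_on {a..b}"
    and f_part: "(\<lambda>s. (f s - f a) * g' s) absolutely_integrable_on {a..b}"
    using continuous_on_if_has_integral_increments[OF f] continuous_on_if_has_integral_increments[OF g]
    by (intro absolutely_integrable_continuous_mult continuous_intros f' g'; simp)+
  have "(\<integral>s. P s * (\<integral>t. indicator {..s} t * Q t \<partial>lebesgue) \<partial>lebesgue)
      = (\<integral>s. indicator {a..b} s * ((g s - g a) * f' s) \<partial>lebesgue)"
    by (rule Bochner_Integration.integral_cong) (auto simp: P_def Q_lower split: split_indicator)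
  moreover have "(\<integral>t. Q t * (\<integral>s. indicator {..<t} s * P s \<partial>lebesgue) \<partial>lebesgue)
      = (\<integral>s. indicator {a..b} s * ((f s - f a) * g' s) \<partial>lebesgue)"
    by (rule Bochner_Integration.integral_cong) (auto simp: Q_def P_lower split: split_indicator)
  moreover have "integrable lebesgue P" "integrable lebesgue Q"
    using f' g' by (simp_all add: P_def Q_def set_integrable_def)
  moreover have "(\<integral>s. P s \<partial>lebesgue) = f b - f a" "(\<integral>t. Q t \<partial>lebesgue) = g b - g a"
    using lebesgue_integral_indicator_eq_integral[OF f'] lebesgue_integral_indicator_eq_integral[OF g']
      f[of b] g[of b] ab by (simp_all add: P_def Q_def integral_unique)
  ultimately have parts: "integral {a..b} (\<lambda>s. (g s - g a) * f' s) + integral {a..b} (\<lambda>s. (f s - f a) * g' s)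
      = (f b - f a) * (g b - g a)"
    using lebesgue_integral_mult_split_diagonal[of P Q]
      lebesgue_integral_indicator_eq_integral[OF g_part] lebesgue_integral_indicator_eq_integral[OF f_part]
    by simp
  have "((\<lambda>s. ((g s - g a) * f' s + (f s - f a) * g' s) + (g a * f' s + f a * g' s)) has_integral
      ((f b - f a) * (g b - g a) + (g a * (f b - f a) + f a * (g b - g a)))) {a..b}"
    unfolding parts[symmetric] using ab
    by (intro has_integral_add has_integral_mult_right f g integrable_integral
        set_lebesgue_integral_eq_integral(1) g_part f_part) auto
  then show ?thesis
    by (simp add: algebra_simps)
qed

lemma le_sqrt_mult_if_le_mean:
  fixes x A B :: real
  assumes A: "0 \<le> A" and B: "0 \<le> B" and le: "\<And>l. 0 < l \<Longrightarrow> x \<le> (l * A + B / l) / 2"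
  shows "x \<le> sqrt (A * B)"
proof (cases "A > 0 \<and> B > 0")
  case True
  define l where "l = sqrt B / sqrt A"
  have "0 < l" using True by (simp add: l_def)
  moreover have "l * A = sqrt (A * B)" "B / l = sqrt (A * B)"
    using True by (simp_all add: l_def real_sqrt_mult field_simps flip: power2_eq_square)
  ultimately show ?thesis
    using le[of l] by simp
next
  case False
  have "x \<le> e" if "0 < e" for e
  proof (cases "A = 0")
    case True
    then show ?thesis
      using le[of "(B + 1) / (2 * e)"] that B by (simp add: field_simps) (smt (verit) mult_mono)
  next
    case False
    then have "B = 0"
      using \<open>\<not> (A > 0 \<and> B > 0)\<close> A B by auto
    then show ?thesis
      using le[of "2 * e / (A + 1)"] that A by (simp add: field_simps) (smt (verit) mult_mono)
  qed
  then show ?thesis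
    using A B by (meson dense not_le real_sqrt_ge_zero mult_nonneg_nonneg order_trans)
qed

lemma abs_le_mean_of_square_and_inverse:
  fixes c y :: real
  assumes "0 < c"
  shows "\<bar>y\<bar> \<le> (c * y\<^sup>2 + 1 / c) / 2"
proof -
  have "0 \<le> (c * \<bar>y\<bar> - 1)\<^sup>2 / c"
    using assms by simp
  also have "\<dots> = c * y\<^sup>2 + 1 / c - 2 * \<bar>y\<bar>"
    using assms by (simp add: power2_eq_square field_simps)
  finally show ?thesis
    by simp
qed

lemma abs_integral_le_weighted_Cauchy_Schwarz:
  fixes f g :: "real \<Rightarrow> real"
  assumes f: "f integrable_on S"
    and gf: "(\<lambda>x. (g x * f x)\<^sup>2) integrable_on S" and g: "(\<lambda>x. 1 / (g x)\<^sup>2) integrable_on S"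
    and nonzero: "\<And>x. x \<in> S \<Longrightarrow> g x \<noteq> 0"
  shows "\<bar>integral S f\<bar> \<le> sqrt (integral S (\<lambda>x. (g x * f x)\<^sup>2) * integral S (\<lambda>x. 1 / (g x)\<^sup>2))"
proof (rule le_sqrt_mult_if_le_mean)
  show "0 \<le> integral S (\<lambda>x. (g x * f x)\<^sup>2)" "0 \<le> integral S (\<lambda>x. 1 / (g x)\<^sup>2)"
    by (simp_all add: integral_nonneg gf g)
  fix l :: real
  assume l: "0 < l"
  let ?mean = "\<lambda>x. (l * (g x * f x)\<^sup>2 + 1 / (g x)\<^sup>2 / l) / 2"
  have mean: "(?mean has_integral
      (l * integral S (\<lambda>x. (g x * f x)\<^sup>2) + integral S (\<lambda>x. 1 / (g x)\<^sup>2) / l) / 2) S"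
    by (intro has_integral_divide has_integral_add has_integral_mult_right integrable_integral gf g)
  have "\<bar>f x\<bar> \<le> ?mean x" if "x \<in> S" for x
  proof -
    have "?mean x = (l * (g x)\<^sup>2 * (f x)\<^sup>2 + 1 / (l * (g x)\<^sup>2)) / 2"
      by (simp add: power_mult_distrib mult.assoc)
    then show ?thesis
      using abs_le_mean_of_square_and_inverse[of "l * (g x)\<^sup>2" "f x"] l nonzero[OF that] by simp
  qed
  then have "\<bar>integral S f\<bar> \<le> integral S ?mean"
    using integral_norm_bound_integral[OF f has_integral_integrable[OF mean]] by simp
  also have "\<dots> = (l * integral S (\<lambda>x. (g x * f x)\<^sup>2) + integral S (\<lambda>x. 1 / (g x)\<^sup>2) / l) / 2"
    using mean by (rule integral_unique)
  finally show "\<bar>integral S f\<bar> \<le> \<dots>" .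
qed

lemma abs_integral_le_Cauchy_Schwarz:
  fixes f :: "real \<Rightarrow> real"
  assumes "a \<le> b" "f integrable_on {a..b}" "(\<lambda>x. (f x)\<^sup>2) integrable_on {a..b}"
  shows "\<bar>integral {a..b} f\<bar> \<le> sqrt (integral {a..b} (\<lambda>x. (f x)\<^sup>2) * (b - a))"
  using abs_integral_le_weighted_Cauchy_Schwarz[of f "{a..b}" "\<lambda>_. 1"] assms by auto

lemma integrable_on_Icc_0_if_bounded_on_subintervals:
  fixes h :: "real \<Rightarrow> real"
  assumes R: "0 < R" and nonneg: "\<And>x. 0 < x \<Longrightarrow> x \<le> R \<Longrightarrow> 0 \<le> h x"
    and int: "\<And>a. 0 < a \<Longrightarrow> a \<le> R \<Longrightarrow> h integrable_on {a..R}"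
    and bound: "\<And>a. 0 < a \<Longrightarrow> a \<le> R \<Longrightarrow> integral {a..R} h \<le> M"
  shows "h integrable_on {0..R}"
proof -
  define T where "T k = {R / Suc k..R}" for k :: nat
  define f where "f k s = (if s \<in> T k then h s else 0)" for k s
  have T_bounds: "0 < R / Suc k" "R / Suc k \<le> R" for k
    using R by (auto simp: field_simps)
  have T: "T k \<inter> {0<..R} = T k" for k
    using T_bounds(1)[of k] by (auto simp: T_def)
  have "h integrable_on {0<..R}"
  proof (rule conjunct1[OF monotone_convergence_increasing])
    show "f k integrable_on {0<..R}" for k
      unfolding f_def integrable_restrict_Int T using int T_bounds by (simp add: T_def)
    show "f k x \<le> f (Suc k) x" if "x \<in> {0<..R}" for k x
    proof -
      have "R / Suc (Suc k) \<le> R / Suc k"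
        using R by (intro divide_left_mono) auto
      then show ?thesis
        using that nonneg by (auto simp: f_def T_def)
    qed
    show "(\<lambda>k. f k x) \<longlonglongrightarrow> h x" if x: "x \<in> {0<..R}" for x
    proof (rule tendsto_eventually)
      obtain n :: nat where "R / x < n"
        using reals_Archimedean2 by blast
      have "x \<in> T k" if "n \<le> k" for k
      proof -
        have "R / x < Suc k"
          using \<open>R / x < n\<close> that by linarith
        then show ?thesis
          using x by (simp add: T_def field_simps)
      qed
      then show "\<forall>\<^sub>F k in sequentially. f k x = h x"
        by (intro eventually_sequentiallyI[of n]) (simp add: f_def)
    qed
    show "bounded (range (\<lambda>k. integral {0<..R} (f k)))"
    proof (rule boundedI)
      fix y
      assume "y \<in> range (\<lambda>k. integral {0<..R} (f k))"
      then obtain k where "y = integral {0<..R} (f k)"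
        by blast
      then have y: "y = integral (T k) h"
        by (simp add: f_def[abs_def] integral_restrict_Int T)
      have "0 \<le> integral (T k) h" "integral (T k) h \<le> M"
        using int T_bounds[of k] nonneg bound by (auto simp: T_def intro!: integral_nonneg)
      then show "norm y \<le> M"
        using y by simp
    qed
  qed
  then show ?thesis
    by (rule iffD1[OF integrable_spike_set_eq, rotated])
      (rule negligible_subset[OF negligible_sing[of 0]], auto)
qed

lemma has_integral_inverse_square:
  fixes a b :: real
  assumes "0 < a" "a \<le> b"
  shows "((\<lambda>s. 1 / s\<^sup>2) has_integral (1 / a - 1 / b)) {a..b}"
proof -
  have "((\<lambda>s. 1 / s\<^sup>2) has_integral ((\<lambda>s. - 1 / s) b - (\<lambda>s. - 1 / s) a)) {a..b}"
  proof (rule fundamental_theorem_of_calculus[OF assms(2)])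
    fix x
    assume "x \<in> {a..b}"
    then have "((\<lambda>s. - 1 / s) has_real_derivative 1 / x\<^sup>2) (at x)"
      using assms by (auto intro!: derivative_eq_intros simp: power2_eq_square)
    then show "((\<lambda>s. - 1 / s) has_vector_derivative 1 / x\<^sup>2) (at x within {a..b})"
      by (simp add: has_real_derivative_iff_has_vector_derivative has_vector_derivative_at_within)
  qed
  then show ?thesis
    by simp
qed

section \<open>An interpolation inequality at an endpoint\<close>

lemma le_powr_inverse_if_powr_le:
  fixes x y q :: real
  assumes "0 \<le> x" "0 < q" "x powr q \<le> y"
  shows "x \<le> y powr (1 / q)"
proof -
  have "x = (x powr q) powr (1 / q)"
    using assms by (simp add: powr_powr)
  also have "\<dots> \<le> y powr (1 / q)"
    using assms by (intro powr_mono2) auto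
  finally show ?thesis .
qed

lemma square_le_by_increments_if_tendsto_0:
  fixes w :: "real \<Rightarrow> real" and R B :: real
  assumes R: "0 < R"
    and increment: "\<And>r. 0 < r \<Longrightarrow> r \<le> R \<Longrightarrow> (w R - w r)\<^sup>2 \<le> B * (R - r)"
    and tendsto: "(w \<longlongrightarrow> 0) (at_right 0)"
  shows "(w R)\<^sup>2 \<le> B * R"
proof (rule tendsto_le[OF trivial_limit_at_right_real])
  show "((\<lambda>r. B * (R - r)) \<longlongrightarrow> B * R) (at_right 0)"
    by (auto intro!: tendsto_eq_intros)
  show "((\<lambda>r. (w R - w r)\<^sup>2) \<longlongrightarrow> (w R)\<^sup>2) (at_right 0)"
    using tendsto by (auto intro!: tendsto_eq_intros)
  show "\<forall>\<^sub>F r in at_right 0. (w R - w r)\<^sup>2 \<le> B * (R - r)"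
    using R increment by (intro eventually_at_rightI[of 0 R]) auto
qed

lemma weighted_integral_ge_plateau:
  fixes w :: "real \<Rightarrow> real" and p R d m :: real
  defines "h \<equiv> \<lambda>r. \<bar>w r\<bar> powr (p + 1) / r powr (p - 1)"
  assumes p: "1 \<le> p" and d: "0 < d" "d < R" and m: "0 \<le> m"
    and plateau: "\<And>r. R - d \<le> r \<Longrightarrow> r \<le> R \<Longrightarrow> m \<le> \<bar>w r\<bar>"
    and h: "h integrable_on {0..R}"
  shows "d * (m powr (p + 1) / R powr (p - 1)) \<le> integral {0..R} h"
proof -
  have "m powr (p + 1) / R powr (p - 1) \<le> h r" if r: "R - d \<le> r" "r \<le> R" for r
    unfolding h_def using p m d r plateau[OF r] by (intro frac_le powr_mono2) auto
  then have "integral {R - d..R} (\<lambda>_. m powr (p + 1) / R powr (p - 1)) \<le> integral {R - d..R} h"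
    using integrable_on_subinterval[OF h, of "R - d" R] d by (intro integral_le) auto
  also have "\<dots> \<le> integral {0..R} h"
    using integrable_on_subinterval[OF h, of "R - d" R] h d
    by (intro integral_subset_le) (auto simp: h_def)
  finally show ?thesis
    using d by simp
qed

lemma abs_le_by_increments_and_weighted_integral:
  fixes w :: "real \<Rightarrow> real" and p R B :: real
  defines "h \<equiv> \<lambda>r. \<bar>w r\<bar> powr (p + 1) / r powr (p - 1)"
  assumes p: "1 \<le> p" and R: "0 < R"
    and increment: "\<And>r. 0 < r \<Longrightarrow> r \<le> R \<Longrightarrow> (w R - w r)\<^sup>2 \<le> B * (R - r)"
    and tendsto: "(w \<longlongrightarrow> 0) (at_right 0)"
    and h: "h integrable_on {0..R}"
  shows "\<bar>w R\<bar> \<le> 2 * R powr ((p - 1) / (p + 3)) * B powr (1 / (p + 3)) * integral {0..R} h powr (1 / (p + 3))"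
proof (cases "w R = 0")
  case True
  then show ?thesis
    by simp
next
  case False
  define W where "W = \<bar>w R\<bar>"
  define d where "d = W\<^sup>2 / (4 * B)"
  have W: "0 < W" "W\<^sup>2 \<le> B * R"
    using False square_le_by_increments_if_tendsto_0[OF R increment tendsto] by (simp_all add: W_def)
  then have "0 < B * R"
    by (meson order.strict_trans2 zero_less_power)
  then have B: "0 < B"
    using R by (simp add: zero_less_mult_iff)
  moreover have "W\<^sup>2 < B * (R * 4)"
    using W \<open>0 < B * R\<close> by linarith
  ultimately have d: "0 < d" "d < R" "B * d = W\<^sup>2 / 4"
    using W R by (auto simp: d_def field_simps)
  have "W / 2 \<le> \<bar>w r\<bar>" if r: "R - d \<le> r" "r \<le> R" for r
  proof -
    have "(w R - w r)\<^sup>2 \<le> (W / 2)\<^sup>2"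
      using increment[of r] mult_left_mono[of "R - r" d B] r d B by (simp add: power_divide)
    then have "\<bar>w R - w r\<bar> \<le> W / 2"
      using W power2_le_imp_le[of "\<bar>w R - w r\<bar>" "W / 2"] by simp
    then show ?thesis
      using abs_triangle_ineq2[of "w R" "w r"] by (simp add: W_def)
  qed
  then have "d * ((W / 2) powr (p + 1) / R powr (p - 1)) \<le> integral {0..R} h"
    unfolding h_def using p d W h by (intro weighted_integral_ge_plateau) (auto simp: h_def)
  then have "R powr (p - 1) * B * (d * ((W / 2) powr (p + 1) / R powr (p - 1)))
      \<le> R powr (p - 1) * B * integral {0..R} h"
    using B by (intro mult_left_mono) auto
  moreover have "(W / 2) powr (p + 3) = (W / 2) powr 2 * (W / 2) powr (p + 1)"
    by (simp only: powr_add[symmetric]) (simp add: add_ac)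
  ultimately have "(W / 2) powr (p + 3) \<le> R powr (p - 1) * B * integral {0..R} h"
    using W R B by (simp add: d_def power2_eq_square field_simps)
  then have "W / 2 \<le> (R powr (p - 1) * B * integral {0..R} h) powr (1 / (p + 3))"
    using W p by (intro le_powr_inverse_if_powr_le) auto
  also have "\<dots> = R powr ((p - 1) / (p + 3)) * B powr (1 / (p + 3)) * integral {0..R} h powr (1 / (p + 3))"
    using B h by (simp add: powr_mult powr_powr integral_nonneg h_def)
  finally show ?thesis
    by (simp add: W_def)
qed

section \<open>Radial profiles in \<open>\<dot>H\<^sup>1(\<real>\<^sup>3)\<close>\<close>

definition radial_energy :: "(real \<Rightarrow> real) \<Rightarrow> real" where
  "radial_energy u' = integral {0<..} (\<lambda>r. r\<^sup>2 * (u' r)\<^sup>2)"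

lemma radial_energy_nonneg: "0 \<le> radial_energy u'"
  unfolding radial_energy_def
  by (cases "(\<lambda>r. r\<^sup>2 * (u' r)\<^sup>2) integrable_on {0<..}") (auto intro: integral_nonneg simp: not_integrable_integral)

context
  fixes u u' :: "real \<Rightarrow> real"
  assumes profile: "radial_Hdot1_profile u u'"
begin

lemma profile_has_integral:
  assumes "0 < a" "a \<le> b"
  shows "(u' has_integral (u b - u a)) {a..b}"
  using profile assms by (simp add: radial_Hdot1_profile_def)

lemma profile_energy_density_integrable:
  assumes "0 < a"
  shows "(\<lambda>r. r\<^sup>2 * (u' r)\<^sup>2) integrable_on {a..b}"
    and "integral {a..b} (\<lambda>r. r\<^sup>2 * (u' r)\<^sup>2) \<le> radial_energy u'"
proof -
  have int: "(\<lambda>r. r\<^sup>2 * (u' r)\<^sup>2) integrable_on {0<..}"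
    using profile by (simp add: radial_Hdot1_profile_def)
  then have "(\<lambda>r. r\<^sup>2 * (u' r)\<^sup>2) absolutely_integrable_on {0<..}"
    by (rule nonnegative_absolutely_integrable_1) simp
  then have "(\<lambda>r. r\<^sup>2 * (u' r)\<^sup>2) absolutely_integrable_on {a..b}"
    by (rule set_integrable_subset) (use assms in auto)
  then show int_ab: "(\<lambda>r. r\<^sup>2 * (u' r)\<^sup>2) integrable_on {a..b}"
    by (rule set_lebesgue_integral_eq_integral(1))
  show "integral {a..b} (\<lambda>r. r\<^sup>2 * (u' r)\<^sup>2) \<le> radial_energy u'"
    unfolding radial_energy_def by (rule integral_subset_le[OF _ int_ab int]) (use assms in auto)
qed

lemma profile_deriv_absolutely_integrable:
  assumes ab: "0 < a" "a \<le> b"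
  shows "u' absolutely_integrable_on {a..b}"
proof (rule measurable_bounded_by_integrable_imp_absolutely_integrable)
  show "u' \<in> borel_measurable (lebesgue_on {a..b})"
    using profile_has_integral[OF ab] by (intro integrable_imp_measurable) (auto simp: integrable_on_def)
  show "(\<lambda>r. (1 + r\<^sup>2 * (u' r)\<^sup>2) / (2 * a)) integrable_on {a..b}"
    by (intro integrable_on_divide integrable_add profile_energy_density_integrable(1) integrable_on_const ab) auto
  show "norm (u' r) \<le> (1 + r\<^sup>2 * (u' r)\<^sup>2) / (2 * a)" if r: "r \<in> {a..b}" for r
  proof -
    have "a * \<bar>u' r\<bar> \<le> r * \<bar>u' r\<bar>"
      using r by (intro mult_right_mono) auto
    moreover have "r * \<bar>u' r\<bar> \<le> (1 + r\<^sup>2 * (u' r)\<^sup>2) / 2"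
      using abs_le_mean_of_square_and_inverse[of 1 "r * u' r"] r ab
      by (simp add: abs_mult power_mult_distrib add.commute)
    ultimately show ?thesis
      using ab by (simp add: field_simps)
  qed
qed auto

lemma profile_continuous_on: "continuous_on {0<..} u"
proof (rule continuous_at_imp_continuous_on, intro ballI)
  fix x :: real
  assume "x \<in> {0<..}"
  then have "continuous_on {x/2..x+1} u" "x \<in> interior {x/2..x+1}"
    using profile_has_integral
    by (auto intro!: continuous_on_if_has_integral_increments[of _ _ u'])
  then show "isCont u x"
    by (rule continuous_on_interior)
qed

lemma profile_abs_diff_le:
  assumes r: "0 < r" "r \<le> b"
  shows "\<bar>u b - u r\<bar> \<le> sqrt (radial_energy u' / r)"
proof -
  have energy: "(\<lambda>s. (s * u' s)\<^sup>2) integrable_on {r..b}" "integral {r..b} (\<lambda>s. (s * u' s)\<^sup>2) \<le> radial_energy u'"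
    using profile_energy_density_integrable[OF r(1), of b] by (simp_all add: power_mult_distrib)
  have "\<bar>u b - u r\<bar> = \<bar>integral {r..b} u'\<bar>"
    using profile_has_integral[OF r] by (simp add: integral_unique)
  also have "\<dots> \<le> sqrt (integral {r..b} (\<lambda>s. (s * u' s)\<^sup>2) * integral {r..b} (\<lambda>s. 1 / s\<^sup>2))"
    using r has_integral_inverse_square[OF r] profile_has_integral[OF r] energy(1)
    by (intro abs_integral_le_weighted_Cauchy_Schwarz) auto
  also have "\<dots> \<le> sqrt (radial_energy u' * (1 / r))"
    using energy has_integral_inverse_square[OF r] r radial_energy_nonneg
      integral_unique[OF has_integral_inverse_square[OF r]] has_integral_integrable
    by (intro real_sqrt_le_mono mult_mono integral_nonneg) auto
  finally show ?thesis
    by simp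
qed

lemma profile_decay:
  assumes r: "0 < r"
  shows "r * (u r)\<^sup>2 \<le> radial_energy u'"
proof -
  have "((\<lambda>b. (u b - u r)\<^sup>2) \<longlongrightarrow> (0 - u r)\<^sup>2) at_top"
    using profile unfolding radial_Hdot1_profile_def by (intro tendsto_intros) auto
  moreover have "\<forall>\<^sub>F b in at_top. (u b - u r)\<^sup>2 \<le> radial_energy u' / r"
    using eventually_ge_at_top[of r] by eventually_elim (use profile_abs_diff_le[OF r] sqrt_ge_absD in blast)
  ultimately have "(u r)\<^sup>2 \<le> radial_energy u' / r"
    using tendsto_upperbound by fastforce
  then show ?thesis
    using r by (simp add: field_simps)
qed

lemma profile_times_r_has_integral:
  assumes ab: "0 < a" "a \<le> b"
  shows "((\<lambda>s. u s + s * u' s) has_integral (b * u b - a * u a)) {a..b}"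
proof -
  have "((\<lambda>s. 1 * u s + id s * u' s) has_integral (id b * u b - id a * u a)) {a..b}"
  proof (rule integration_by_parts_absolutely_integrable[OF ab(2)])
    show "(\<lambda>s. 1::real) absolutely_integrable_on {a..b}" "u' absolutely_integrable_on {a..b}"
      by (simp_all add: profile_deriv_absolutely_integrable[OF ab])
    show "((\<lambda>s. 1) has_integral (id x - id a)) {a..x}" if "x \<in> {a..b}" for x
      using has_integral_const_real[of "1::real" a x] that by simp
    show "(u' has_integral (u x - u a)) {a..x}" if "x \<in> {a..b}" for x
      using profile_has_integral ab that by simp
  qed
  then show ?thesis
    by simp
qed

lemma profile_times_r_deriv_absolutely_integrable:
  assumes ab: "0 < a" "a \<le> b"
  shows "(\<lambda>s. u s + s * u' s) absolutely_integrable_on {a..b}"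
proof (rule set_integral_add)
  have "continuous_on {a..b} u"
    by (rule continuous_on_subset[OF profile_continuous_on]) (use ab in auto)
  then show "u absolutely_integrable_on {a..b}"
    by (rule absolutely_integrable_continuous_real)
  show "(\<lambda>s. s * u' s) absolutely_integrable_on {a..b}"
    by (intro absolutely_integrable_continuous_mult continuous_intros profile_deriv_absolutely_integrable[OF ab])
qed

text \<open>The square of \<open>(r u)' = u + r u'\<close> differs from the energy density \<open>r\<^sup>2 u'\<^sup>2\<close> by the
  exact derivative \<open>(r u\<^sup>2)'\<close>.\<close>

lemma profile_times_r_deriv_square_has_integral:
  assumes ab: "0 < a" "a \<le> b"
  shows "((\<lambda>s. (u s + s * u' s)\<^sup>2) has_integral
           (b * (u b)\<^sup>2 - a * (u a)\<^sup>2 + integral {a..b} (\<lambda>s. s\<^sup>2 * (u' s)\<^sup>2))) {a..b}"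
proof -
  have "((\<lambda>s. (u s + s * u' s) * u s + (s * u s) * u' s) has_integral (b * u b * u b - a * u a * u a)) {a..b}"
  proof (rule integration_by_parts_absolutely_integrable[OF ab(2)])
    show "(\<lambda>s. u s + s * u' s) absolutely_integrable_on {a..b}" "u' absolutely_integrable_on {a..b}"
      by (simp_all add: profile_times_r_deriv_absolutely_integrable profile_deriv_absolutely_integrable ab)
    show "((\<lambda>s. u s + s * u' s) has_integral (x * u x - a * u a)) {a..x}" if "x \<in> {a..b}" for x
      using profile_times_r_has_integral ab that by simp
    show "(u' has_integral (u x - u a)) {a..x}" if "x \<in> {a..b}" for x
      using profile_has_integral ab that by simp
  qed
  from has_integral_add[OF this integrable_integral[OF profile_energy_density_integrable(1)[OF ab(1)]]]
  show ?thesis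
    by (simp add: power2_eq_square algebra_simps)
qed

lemma profile_times_r_deriv_square_integrable:
  assumes R: "0 < R"
  shows "(\<lambda>s. (u s + s * u' s)\<^sup>2) integrable_on {0..R}"
proof (rule integrable_on_Icc_0_if_bounded_on_subintervals[OF R])
  fix a
  assume a: "0 < a" "a \<le> R"
  show "(\<lambda>s. (u s + s * u' s)\<^sup>2) integrable_on {a..R}"
    using profile_times_r_deriv_square_has_integral[OF a] by blast
  have "integral {a..R} (\<lambda>s. (u s + s * u' s)\<^sup>2)
      = R * (u R)\<^sup>2 - a * (u a)\<^sup>2 + integral {a..R} (\<lambda>s. s\<^sup>2 * (u' s)\<^sup>2)"
    by (rule integral_unique[OF profile_times_r_deriv_square_has_integral[OF a]])
  also have "\<dots> \<le> radial_energy u' + radial_energy u'"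
  proof -
    have "0 \<le> a * (u a)\<^sup>2"
      using a by simp
    then show ?thesis
      using profile_decay[OF R] profile_energy_density_integrable(2)[OF a(1), of R] by linarith
  qed
  finally show "integral {a..R} (\<lambda>s. (u s + s * u' s)\<^sup>2) \<le> 2 * radial_energy u'"
    by simp
qed simp

lemma profile_times_r_increment:
  assumes r: "0 < r" "r \<le> R"
  shows "(R * u R - r * u r)\<^sup>2 \<le> integral {0..R} (\<lambda>s. (u s + s * u' s)\<^sup>2) * (R - r)"
proof -
  have "\<bar>R * u R - r * u r\<bar> = \<bar>integral {r..R} (\<lambda>s. u s + s * u' s)\<bar>"
    using profile_times_r_has_integral[OF r] by (simp add: integral_unique)
  also have "\<dots> \<le> sqrt (integral {r..R} (\<lambda>s. (u s + s * u' s)\<^sup>2) * (R - r))"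
    using r profile_times_r_has_integral[OF r] profile_times_r_deriv_square_has_integral[OF r]
    by (intro abs_integral_le_Cauchy_Schwarz) auto
  also have "\<dots> \<le> sqrt (integral {0..R} (\<lambda>s. (u s + s * u' s)\<^sup>2) * (R - r))"
  proof -
    have "integral {r..R} (\<lambda>s. (u s + s * u' s)\<^sup>2) \<le> integral {0..R} (\<lambda>s. (u s + s * u' s)\<^sup>2)"
      using r profile_times_r_deriv_square_integrable[of R] profile_times_r_deriv_square_has_integral[OF r]
      by (intro integral_subset_le) auto
    then show ?thesis
      using r by (simp add: mult_right_mono)
  qed
  finally show ?thesis
    by (rule sqrt_ge_absD)
qed

lemma profile_times_r_square_le:
  assumes "0 < r"
  shows "(r * u r)\<^sup>2 \<le> radial_energy u' * r"
proof -
  have "(r * u r)\<^sup>2 = (r * (u r)\<^sup>2) * r"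
    by (simp add: power2_eq_square)
  also have "\<dots> \<le> radial_energy u' * r"
    using profile_decay[OF assms] assms by (intro mult_right_mono) auto
  finally show ?thesis .
qed

lemma profile_times_r_tendsto_0: "((\<lambda>r. r * u r) \<longlongrightarrow> 0) (at_right 0)"
proof (rule Lim_null_comparison)
  show "\<forall>\<^sub>F r in at_right 0. norm (r * u r) \<le> sqrt (r * radial_energy u')"
  proof (rule eventually_at_rightI[of 0 1])
    fix r :: real
    assume "r \<in> {0<..<1}"
    then have "(r * u r)\<^sup>2 \<le> r * radial_energy u'"
      using profile_times_r_square_le[of r] by (simp add: mult.commute)
    then show "norm (r * u r) \<le> sqrt (r * radial_energy u')"
      by (simp add: real_le_rsqrt)
  qed simp
  show "((\<lambda>r. sqrt (r * radial_energy u')) \<longlongrightarrow> 0) (at_right 0)"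
    by (rule tendsto_eq_intros refl | simp)+
qed

lemma profile_potential_le:
  fixes p r :: real
  assumes p: "-1 \<le> p" and r: "0 < r"
  shows "\<bar>r * u r\<bar> powr (p + 1) / r powr (p - 1) \<le> radial_energy u' powr ((p + 1) / 2) * r powr ((3 - p) / 2)"
proof -
  have "2 * ((p + 1) / 2) = p + 1"
    by simp
  then have "\<bar>r * u r\<bar> powr (p + 1) = (\<bar>r * u r\<bar> powr 2) powr ((p + 1) / 2)"
    by (simp only: powr_powr)
  also have "\<dots> \<le> (radial_energy u' * r) powr ((p + 1) / 2)"
    using profile_times_r_square_le[OF r] p by (intro powr_mono2) auto
  also have "\<dots> = radial_energy u' powr ((p + 1) / 2) * r powr ((p + 1) / 2)"
    using r radial_energy_nonneg by (simp add: powr_mult)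
  finally have "\<bar>r * u r\<bar> powr (p + 1) / r powr (p - 1)
      \<le> radial_energy u' powr ((p + 1) / 2) * (r powr ((p + 1) / 2) / r powr (p - 1))"
    using r by (simp add: divide_right_mono)
  also have "r powr ((p + 1) / 2) / r powr (p - 1) = r powr ((3 - p) / 2)"
    by (simp add: powr_diff [symmetric] field_simps)
  finally show ?thesis .
qed

lemma profile_potential_integrable:
  fixes p R :: real
  assumes p: "-1 < p" "p < 5" and R: "0 < R"
  shows "(\<lambda>r. \<bar>r * u r\<bar> powr (p + 1) / r powr (p - 1)) integrable_on {0..R}"
proof -
  define h where "h r = \<bar>r * u r\<bar> powr (p + 1) / r powr (p - 1)" for r
  have "(\<lambda>r. radial_energy u' powr ((p + 1) / 2) * r powr ((3 - p) / 2)) integrable_on {0<..R}"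
    by (intro integrable_on_mult_right integrable_on_powr_from_0') (use p R in auto)
  moreover have "continuous_on {0<..R} h"
    unfolding h_def using p
    by (intro continuous_on_divide continuous_on_powr' continuous_intros
        continuous_on_subset[OF profile_continuous_on]) auto
  ultimately have "h absolutely_integrable_on {0<..R}"
    using profile_potential_le p by (intro measurable_bounded_by_integrable_imp_absolutely_integrable
        continuous_imp_measurable_on_sets_lebesgue) (auto simp: h_def)
  then have "h integrable_on {0<..R}"
    by (rule set_lebesgue_integral_eq_integral(1))
  then show ?thesis
    unfolding h_def[abs_def]
    by (rule iffD1[OF integrable_spike_set_eq, rotated])
      (rule negligible_subset[OF negligible_sing[of 0]], auto)
qed

lemma profile_endpoint_bound:
  fixes p R :: real
  assumes p: "1 \<le> p" "p < 5" and R: "0 < R"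
  shows "\<bar>R * u R\<bar> \<le> 2 * R powr ((p - 1) / (p + 3))
      * integral {0..R} (\<lambda>r. \<bar>u r + r * u' r\<bar>\<^sup>2) powr (1 / (p + 3))
      * integral {0..R} (\<lambda>r. \<bar>r * u r\<bar> powr (p + 1) / r powr (p - 1)) powr (1 / (p + 3))"
  using abs_le_by_increments_and_weighted_integral[of p R "\<lambda>r. r * u r"] p R
    profile_times_r_increment profile_times_r_tendsto_0 profile_potential_integrable
  by simp

end

theorem lemma2p2:
  fixes p :: real
  assumes "3 \<le> p" and "p < 5"
  shows "\<exists>C>0. \<forall>u u' R. radial_Hdot1_profile u u' \<longrightarrow> R > 0 \<longrightarrow>
    \<bar>R * u R\<bar> \<le> C * R powr ((p - 1) / (p + 3))
      * (integral {0..R} (\<lambda>r. \<bar>u r + r * u' r\<bar>\<^sup>2)) powr (1 / (p + 3))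
      * (integral {0..R} (\<lambda>r. \<bar>r * u r\<bar> powr (p + 1) / r powr (p - 1))) powr (1 / (p + 3))"
  using assms profile_endpoint_bound by (intro exI[of _ 2]) auto

end
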